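(* Drag sum is associative (whenever the sums involved are defined, i.e. the drags are pairwise compatible), commutative ($D\oplus D'=D'\oplus D$ for compatible $D,D'$), idempotent ($D\oplus D=D$), and has the empty drag as identity element ($D\oplus\varnothing=D$).
   Context: Fix a set $\mathcal{F}$ of function symbols, each with a fixed arity, and a set $\mathcal{X}$ of variables disjoint from $\mathcal{F}$. A drag is a tuple $D=\langle V,R,L,X,S\rangle$ where: $V$ is a finite set of vertices; $R:V\to\mathbb{N}$ is a finite multiset of vertices, the roots ($v$ is rooted if $R(v)>0$); $S\subseteq V$ is the set of sprouts and $I=V\setminus S$ the set of internal vertices; $L:V\to\mathcal{F}\cup\mathcal{X}$ labels internal vertices by function symbols and sprouts by variables; $X:V\to V^*$ assigns to each vertex a list of successors whose length is the arity of its label (sprouts have no successors). If $b$ is the $k$-th element of $X(a)$, then $(a,k,b)$ is an edge with tail $a$ and head $b$. $\mathrm{pred}(v,D)$ is the number of edges with head $v$, and the indegree of $v$ is $\mathrm{In}(v,D)=\mathrm{pred}(v,D)+R(v)$. The empty drag $\varnothing$ has no vertices. Drags $D=\langle V,R,L,X,S\rangle$ and $D'=\langle V',R',L',X',S'\rangle$ are compatible if $V\cap V'$ is closed under the successor functions of both drags, $L$ and $L'$ coincide on $V\cap V'$, and every shared vertex $v$ has the same indegree in $D$ and in $D'$, this indegree being at least the total number of distinct edges of $D$ and of $D'$ with head $v$. Their sum is $D\oplus D'=\langle V\cup V',R'',L\cup L',X\cup X',S\cup S'\rangle$, where $R''(v)=R(v)-|\{\text{edges of }D'\text{ not in }D\text{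 with head }v\}|$ for $v\in V$ (for $v\in V\cap V'$ this equals $R'(v)-|\{\text{edges of }D\text{ not in }D'\text{ with head }v\}|$) and $R''(v)=R'(v)$ for $v\in V'\setminus V$. *)

theory Defs
  imports Main
begin

text \<open>Labels are of type 'f + 'x: Inl f for internal vertices, Inr x for sprouts.
  A drag is represented by a record; outside its vertex set the components take
  canonical values (no roots, no successors, label undefined), so that record
  equality is equality of drags.\<close>

record ('v, 'f, 'x) drag =
  verts   :: "'v set"
  roots   :: "'v \<Rightarrow> nat"
  lab     :: "'v \<Rightarrow> 'f + 'x"
  succs   :: "'v \<Rightarrow> 'v list"
  sprouts :: "'v set"

definition is_drag :: "('f \<Rightarrow> nat) \<Rightarrow> ('v, 'f, 'x) drag \<Rightarrow> bool" where
  "is_drag ar D \<longleftrightarrow>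
     finite (verts D) \<and>
     sprouts D \<subseteq> verts D \<and>
     (\<forall>v. v \<notin> verts D \<longrightarrow> roots D v = 0 \<and> succs D v = [] \<and> lab D v = undefined) \<and>
     (\<forall>v \<in> verts D. set (succs D v) \<subseteq> verts D) \<and>
     (\<forall>v \<in> sprouts D. (\<exists>x. lab D v = Inr x) \<and> succs D v = []) \<and>
     (\<forall>v \<in> verts D - sprouts D. \<exists>f. lab D v = Inl f \<and> length (succs D v) = ar f)"

definition empty_drag :: "('v, 'f, 'x) drag" where
  "empty_drag = \<lparr>verts = {}, roots = (\<lambda>_. 0), lab = (\<lambda>_. undefined),
                 succs = (\<lambda>_. []), sprouts = {}\<rparr>"

text \<open>Edges (a,k,b): b is the k-th (1-based) successor of a.\<close>
definition edges :: "('v, 'f, 'x) drag \<Rightarrow> ('v \<times> nat \<times> 'v) set" where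
  "edges D = {(a, k, b). a \<in> verts D \<and> 1 \<le> k \<and> k \<le> length (succs D a)
                          \<and> succs D a ! (k - 1) = b}"

definition edges_to :: "('v \<times> nat \<times> 'v) set \<Rightarrow> 'v \<Rightarrow> ('v \<times> nat \<times> 'v) set" where
  "edges_to E v = {e \<in> E. snd (snd e) = v}"

definition pred :: "'v \<Rightarrow> ('v, 'f, 'x) drag \<Rightarrow> nat" where
  "pred v D = card (edges_to (edges D) v)"

definition indeg :: "'v \<Rightarrow> ('v, 'f, 'x) drag \<Rightarrow> nat" where
  "indeg v D = pred v D + roots D v"

definition compatible :: "('v, 'f, 'x) drag \<Rightarrow> ('v, 'f, 'x) drag \<Rightarrow> bool" where
  "compatible D D' \<longleftrightarrow>
     (\<forall>v \<in> verts D \<inter> verts D'.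
        set (succs D v) \<subseteq> verts D \<inter> verts D' \<and>
        set (succs D' v) \<subseteq> verts D \<inter> verts D' \<and>
        lab D v = lab D' v \<and>
        succs D v = succs D' v \<and>
        indeg v D = indeg v D' \<and>
        card (edges_to (edges D \<union> edges D') v) \<le> indeg v D)"

definition drag_sum :: "('v, 'f, 'x) drag \<Rightarrow> ('v, 'f, 'x) drag \<Rightarrow> ('v, 'f, 'x) drag"
  (infixl "\<oplus>\<^sub>D" 65) where
  "drag_sum D D' = \<lparr>verts = verts D \<union> verts D',
     roots = (\<lambda>v. if v \<in> verts D
                   then roots D v - card (edges_to (edges D' - edges D) v)
                   else roots D' v),
     lab = (\<lambda>v. if v \<in> verts D then lab D v else lab D' v),
     succs = (\<lambda>v. if v \<in> verts D then succs D v else succs D' v),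
     sprouts = sprouts D \<union> sprouts D'\<rparr>"

end

theory Submission
  imports Defs
begin

text \<open>Labels, successors and sprouts of a sum are plain unions (compatible drags agree on shared
  vertices), so only the root counts need an argument. Since edges of the sum are the union of the
  edges of the summands, associativity reduces to splitting a count of new edges in two, and
  commutativity to the fact that on a shared vertex both root counts equal the common indegree
  minus the number of distinct incoming edges of the two drags.\<close>

lemma edges_to_simps [simp]:
  "edges_to (A \<union> B) v = edges_to A v \<union> edges_to B v"
  "edges_to (A - B) v = edges_to A v - edges_to B v"
  "edges_to {} v = {}"
  unfolding edges_to_def by auto

lemma drag_sum_simps [simp]:
  "verts (D \<oplus>\<^sub>D D') = verts D \<union> verts D'"
  "roots (D \<oplus>\<^sub>D D') v = (if v \<in> verts D
     then roots D v - card (edges_to (edges D' - edges D) v) else roots D' v)"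
  "lab (D \<oplus>\<^sub>D D') v = (if v \<in> verts D then lab D v else lab D' v)"
  "succs (D \<oplus>\<^sub>D D') v = (if v \<in> verts D then succs D v else succs D' v)"
  "sprouts (D \<oplus>\<^sub>D D') = sprouts D \<union> sprouts D'"
  "drag.more (D \<oplus>\<^sub>D D') = ()"
  unfolding drag_sum_def by auto

lemma empty_drag_simps [simp]:
  "verts empty_drag = {}" "roots empty_drag v = 0" "lab empty_drag v = undefined"
  "succs empty_drag v = []" "sprouts empty_drag = {}" "edges empty_drag = {}"
  unfolding empty_drag_def edges_def by auto

lemma finite_edges:
  assumes "is_drag ar D"
  shows "finite (edges D)"
proof -
  have "edges D = (\<Union>a\<in>verts D. (\<lambda>k. (a, k, succs D a ! (k - 1))) ` {1..length (succs D a)})"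
    unfolding edges_def by auto
  then show ?thesis
    using assms unfolding is_drag_def by auto
qed

lemma finite_edges_to: "is_drag ar D \<Longrightarrow> finite (edges_to (edges D) v)"
  unfolding edges_to_def using finite_edges[of ar D] by auto

lemma edges_to_outside_verts:
  assumes D: "is_drag ar D" and v: "v \<notin> verts D"
  shows "edges_to (edges D) v = {}"
proof -
  have "v \<in> set (succs D a)" if "1 \<le> k" "k \<le> length (succs D a)" "succs D a ! (k - 1) = v" for a k
    using that nth_mem[of "k - 1" "succs D a"] by auto
  then show ?thesis
    using D v unfolding is_drag_def edges_to_def edges_def by fastforce
qed

lemma edges_drag_sum:
  assumes "compatible D D'"
  shows "edges (D \<oplus>\<^sub>D D') = edges D \<union> edges D'"
proof -
  have "succs D a = succs D' a" if "a \<in> verts D" "a \<in> verts D'" for a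
    using assms that unfolding compatible_def by blast
  then show ?thesis
    unfolding edges_def by (auto 0 4 split: if_splits)
qed

lemma card_Un_Diff_split:
  assumes "finite X" "finite Y"
  shows "card ((X \<union> Y) - Z) = card (X - Z) + card (Y - (Z \<union> X))"
proof -
  have "(X \<union> Y) - Z = (X - Z) \<union> (Y - (Z \<union> X))" "(X - Z) \<inter> (Y - (Z \<union> X)) = {}"
    by blast+
  then show ?thesis
    using assms by (simp add: card_Un_disjoint)
qed

lemma roots_drag_sum_shared:
  assumes D: "is_drag ar D" and D': "is_drag ar D'" and c: "compatible D D'"
    and v: "v \<in> verts D" "v \<in> verts D'"
  shows "roots (D \<oplus>\<^sub>D D') v = indeg v D - card (edges_to (edges D \<union> edges D') v)"
proof -
  let ?A = "edges_to (edges D) v" and ?B = "edges_to (edges D') v"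
  have fin: "finite ?A" "finite ?B"
    using finite_edges_to[OF D] finite_edges_to[OF D'] by auto
  have "card (edges_to (edges D \<union> edges D') v) \<le> indeg v D"
    using c v unfolding compatible_def by blast
  moreover have "card (?A \<union> ?B) = card ?A + card (?B - ?A)"
    using card_Un_Diff_split[OF fin, of "{}"] by simp
  ultimately show ?thesis
    using v unfolding indeg_def pred_def by simp
qed

lemma drag_sum_assoc:
  assumes D1: "is_drag ar D1" and D2: "is_drag ar D2" and D3: "is_drag ar D3"
    and c12: "compatible D1 D2" and c23: "compatible D2 D3"
  shows "(D1 \<oplus>\<^sub>D D2) \<oplus>\<^sub>D D3 = D1 \<oplus>\<^sub>D (D2 \<oplus>\<^sub>D D3)"
proof -
  have "roots ((D1 \<oplus>\<^sub>D D2) \<oplus>\<^sub>D D3) v = roots (D1 \<oplus>\<^sub>D (D2 \<oplus>\<^sub>D D3)) v" for v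
  proof (cases "v \<in> verts D1")
    case True
    have "card (edges_to (edges D2 \<union> edges D3 - edges D1) v)
        = card (edges_to (edges D2 - edges D1) v)
          + card (edges_to (edges D3 - (edges D1 \<union> edges D2)) v)"
      using card_Un_Diff_split[OF finite_edges_to[OF D2] finite_edges_to[OF D3]] by simp
    then show ?thesis
      using True by (simp add: edges_drag_sum[OF c12] edges_drag_sum[OF c23])
  next
    case False
    then show ?thesis
      using edges_to_outside_verts[OF D1 False]
      by (simp add: edges_drag_sum[OF c12] edges_drag_sum[OF c23])
  qed
  then show ?thesis
    by (intro drag.equality) auto
qed

lemma drag_sum_commute:
  assumes D: "is_drag ar D" and D': "is_drag ar D'" and c: "compatible D D'"
  shows "D \<oplus>\<^sub>D D' = D' \<oplus>\<^sub>D D"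
proof -
  have c': "compatible D' D"
    using c unfolding compatible_def by (metis Int_commute Un_commute)
  have "roots (D \<oplus>\<^sub>D D') v = roots (D' \<oplus>\<^sub>D D) v" for v
  proof (cases "v \<in> verts D \<and> v \<in> verts D'")
    case True
    have "indeg v D = indeg v D'"
      using c True unfolding compatible_def by blast
    then show ?thesis
      using True roots_drag_sum_shared[OF D D' c] roots_drag_sum_shared[OF D' D c']
      by (simp add: Un_commute)
  next
    case False
    then show ?thesis
      using D D' edges_to_outside_verts[OF D] edges_to_outside_verts[OF D']
      unfolding is_drag_def by auto
  qed
  moreover have "lab (D \<oplus>\<^sub>D D') v = lab (D' \<oplus>\<^sub>D D) v"
      and "succs (D \<oplus>\<^sub>D D') v = succs (D' \<oplus>\<^sub>D D) v" for v
    using c D D' unfolding compatible_def is_drag_def by auto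
  ultimately show ?thesis
    by (intro drag.equality) (auto simp: Un_commute)
qed

lemma drag_sum_idem: "D \<oplus>\<^sub>D D = D"
  by (intro drag.equality) auto

lemma drag_sum_empty_right:
  assumes "is_drag ar D"
  shows "D \<oplus>\<^sub>D empty_drag = D"
proof -
  have "v \<notin> verts D \<Longrightarrow> roots D v = 0 \<and> succs D v = [] \<and> lab D v = undefined" for v
    using assms unfolding is_drag_def by blast
  then show ?thesis
    by (intro drag.equality) (auto simp: fun_eq_iff)
qed

theorem mainTheorem11:
  fixes ar :: "'f \<Rightarrow> nat"
  shows "(\<forall>D1 D2 D3 :: ('v, 'f, 'x) drag.
            is_drag ar D1 \<and> is_drag ar D2 \<and> is_drag ar D3 \<and>
            compatible D1 D2 \<and> compatible D2 D3 \<and> compatible D1 D3 \<and>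
            compatible (D1 \<oplus>\<^sub>D D2) D3 \<and> compatible D1 (D2 \<oplus>\<^sub>D D3) \<longrightarrow>
            (D1 \<oplus>\<^sub>D D2) \<oplus>\<^sub>D D3 = D1 \<oplus>\<^sub>D (D2 \<oplus>\<^sub>D D3)) \<and>
         (\<forall>D D' :: ('v, 'f, 'x) drag.
            is_drag ar D \<and> is_drag ar D' \<and> compatible D D' \<longrightarrow>
            D \<oplus>\<^sub>D D' = D' \<oplus>\<^sub>D D) \<and>
         (\<forall>D :: ('v, 'f, 'x) drag. is_drag ar D \<longrightarrow> D \<oplus>\<^sub>D D = D) \<and>
         (\<forall>D :: ('v, 'f, 'x) drag. is_drag ar D \<longrightarrow> D \<oplus>\<^sub>D empty_drag = D)"
  using drag_sum_assoc[of ar] drag_sum_commute[of ar] drag_sum_idem drag_sum_empty_right[of ar]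
  by blast

end
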